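(* Let $k\in\mathbb{N}$ and let $A\subseteq\mathbb{N}$ with $\min(A)=0$ and $\max(A)\le k$. If $B$ and $D$ are different divisors of $A$, then $F(B)\cap F(D)=\emptyset$.
   Context: $\mathbb{N}=\{0,1,2,\ldots\}$, $[m]=\{0,1,\ldots,m\}$ (with $[m]=\emptyset$ for $m<0$). $S+T=\{s+t:s\in S,t\in T\}$. A set $B\subseteq\mathbb{N}$ is a divisor of $A$ if $B+C=A$ for some $C\subseteq\mathbb{N}$. For $A$ as in the claim and sets $X,Y$ with $X+Y=A$, define $Y_X=Y\cup\{s\in[k]\setminus A: s<\max(X)\}\cup\{s-\max(X): s\in[k]\setminus A,\ s\ge\max(X)\}$ ($k$-promotion). For a divisor $B$ of $A$, $F(B)$ is the set of subsets of $\mathbb{N}$ obtained as follows: for each $C\subseteq\mathbb{N}$ with $B+C=A$, if $\max(B)\le\max(C)$ then $B\in F(B)$, and if $\max(B)\ge\max(C)$ then $B_C\in F(B)$, where $B_C=B\cup\{s\in[k]\setminus A:s<\max(C)\}\cup\{s-\max(C):s\in[k]\setminus A,\ s\ge\max(C)\}$ (so if $\max(C)=\max(B)$ both $B$ and $B_C$ lie in $F(B)$). *)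

theory Defs
  imports Main
begin

definition sumset :: "nat set \<Rightarrow> nat set \<Rightarrow> nat set" where
  "sumset S T = {s + t | s t. s \<in> S \<and> t \<in> T}"

definition is_divisor :: "nat set \<Rightarrow> nat set \<Rightarrow> bool" where
  "is_divisor A B \<longleftrightarrow> (\<exists>C. sumset B C = A)"

definition promotion :: "nat \<Rightarrow> nat set \<Rightarrow> nat set \<Rightarrow> nat set \<Rightarrow> nat set" where
  "promotion k A Y X = Y \<union> {s \<in> {0..k} - A. s < Max X}
      \<union> {s - Max X | s. s \<in> {0..k} - A \<and> s \<ge> Max X}"

definition Fam :: "nat \<Rightarrow> nat set \<Rightarrow> nat set \<Rightarrow> nat set set" where
  "Fam k A B = {E. \<exists>C. sumset B C = A \<and>
      ((Max B \<le> Max C \<and> E = B) \<or> (Max B \<ge> Max C \<and> E = promotion k A B C))}"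

end

theory Submission
  imports Defs
begin

text \<open>Each member E of F(B) produced from a cofactor C is B together with a set of shifted
  gaps of A that is disjoint from B, so B is recovered from E once Max C is known.
  And Max C is read off from Max E: without promotion Max E = Max A - Max C \<le> Max C,
  with promotion Max E = k - Max C and 2 Max C \<le> Max A. Since Max A \<le> k these two
  readings agree, so a common member of F(B) and F(D) forces B = D.\<close>

definition promoted_gaps :: "nat \<Rightarrow> nat set \<Rightarrow> nat \<Rightarrow> nat set" where
  "promoted_gaps k A m = {s \<in> {0..k} - A. s < m} \<union> {s - m | s. s \<in> {0..k} - A \<and> s \<ge> m}"

lemma promotion_eq_Un_promoted_gaps:
  "promotion k A Y X = Y \<union> promoted_gaps k A (Max X)"
  unfolding promotion_def promoted_gaps_def by blast

lemma sumset_commute: "sumset B C = sumset C B"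
  unfolding sumset_def by (auto; metis add.commute)

lemma zero_mem_sumsetD:
  assumes "0 \<in> sumset B C"
  shows "0 \<in> B" "0 \<in> C"
  using assms unfolding sumset_def by auto

lemma subset_sumset_if_zero_mem:
  assumes "0 \<in> C"
  shows "B \<subseteq> sumset B C"
  using assms unfolding sumset_def by force

lemma Max_sumset:
  assumes "finite B" "B \<noteq> {}" "finite C" "C \<noteq> {}"
  shows "Max (sumset B C) = Max B + Max C"
proof (rule Max_eqI)
  show "finite (sumset B C)"
  proof -
    have "sumset B C = (\<lambda>(b, c). b + c) ` (B \<times> C)"
      unfolding sumset_def by auto
    then show ?thesis using assms by simp
  qed
  show "Max B + Max C \<in> sumset B C"
    using assms unfolding sumset_def by (blast intro: Max_in)
  show "x \<le> Max B + Max C" if "x \<in> sumset B C" for x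
    using that assms unfolding sumset_def by (auto intro: add_mono)
qed

lemma factors_of_sumset_with_zero:
  assumes "sumset B C = A" "finite A" "0 \<in> A"
  shows "0 \<in> B" "0 \<in> C" "B \<subseteq> A" "C \<subseteq> A" "finite B" "finite C"
    and "Max A = Max B + Max C"
proof -
  show B0: "0 \<in> B" and C0: "0 \<in> C"
    using zero_mem_sumsetD assms(1,3) by blast+
  show BA: "B \<subseteq> A"
    using subset_sumset_if_zero_mem[OF C0] assms(1) by blast
  show CA: "C \<subseteq> A"
    using subset_sumset_if_zero_mem[OF B0] assms(1) sumset_commute by metis
  show "finite B" "finite C"
    using BA CA assms(2) finite_subset by blast+
  then show "Max A = Max B + Max C"
    using Max_sumset B0 C0 assms(1) by blast
qed

lemma disjoint_promoted_gaps:
  assumes "sumset B C = A" "finite A" "0 \<in> A"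
  shows "B \<inter> promoted_gaps k A (Max C) = {}"
proof -
  note facts = factors_of_sumset_with_zero[OF assms]
  have "b \<in> A \<and> b + Max C \<in> A" if "b \<in> B" for b
    using that facts Max_in[of C] assms(1) unfolding sumset_def by blast
  then show ?thesis
    unfolding promoted_gaps_def by force
qed

lemma Max_promotion:
  assumes "sumset B C = A" "finite A" "0 \<in> A" "Max A \<le> k" "Max C \<le> Max B"
  shows "Max (promotion k A B C) = k - Max C"
proof (rule Max_eqI)
  note facts = factors_of_sumset_with_zero[OF assms(1-3)]
  show "finite (promotion k A B C)"
    using facts unfolding promotion_def by auto
  show "x \<le> k - Max C" if x: "x \<in> promotion k A B C" for x
  proof -
    consider "x \<in> B" | "x < Max C" | s where "s \<le> k" "x = s - Max C"
      using x unfolding promotion_def by auto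
    then show ?thesis
    proof cases
      case 1
      then show ?thesis using Max_ge[of B x] facts assms(4) by linarith
    qed (use facts assms(4,5) in linarith)+
  qed
  show "k - Max C \<in> promotion k A B C"
  proof (cases "k \<in> A")
    case True
    then have "k - Max C = Max B"
      using Max_ge[OF assms(2)] facts assms(4) by fastforce
    moreover have "Max B \<in> B"
      using Max_in facts by blast
    ultimately show ?thesis
      unfolding promotion_def by simp
  next
    case False
    then show ?thesis
      using facts assms(4) unfolding promotion_def by auto
  qed
qed

lemma Fam_memE:
  assumes "E \<in> Fam k A B" "finite A" "0 \<in> A" "Max A \<le> k"
  obtains C where "B = E - promoted_gaps k A (Max C)"
    and "Max E + Max C = Max A \<and> Max E \<le> Max C \<or> Max E + Max C = k \<and> 2 * Max C \<le> Max A"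
proof -
  obtain C where C: "sumset B C = A"
    and cases: "Max B \<le> Max C \<and> E = B \<or> Max C \<le> Max B \<and> E = promotion k A B C"
    using assms(1) unfolding Fam_def by blast
  note facts = factors_of_sumset_with_zero[OF C assms(2,3)]
  have "B = E - promoted_gaps k A (Max C)"
    using cases disjoint_promoted_gaps[OF C assms(2,3)] promotion_eq_Un_promoted_gaps by auto
  moreover have "Max E + Max C = Max A \<and> Max E \<le> Max C \<or> Max E + Max C = k \<and> 2 * Max C \<le> Max A"
    using cases Max_promotion[OF C assms(2-4)] facts(7) assms(4) by auto
  ultimately show thesis by (rule that)
qed

theorem mainTheorem5:
  fixes k :: nat and A B D :: "nat set"
  assumes "finite A" and "A \<noteq> {}" and "Min A = 0" and "Max A \<le> k"
    and "is_divisor A B" and "is_divisor A D" and "B \<noteq> D"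
  shows "Fam k A B \<inter> Fam k A D = {}"
proof (rule ccontr)
  assume "Fam k A B \<inter> Fam k A D \<noteq> {}"
  then obtain E where EB: "E \<in> Fam k A B" and ED: "E \<in> Fam k A D" by blast
  have "0 \<in> A" using assms(1-3) Min_in by fastforce
  obtain C where B: "B = E - promoted_gaps k A (Max C)"
    and levelC: "Max E + Max C = Max A \<and> Max E \<le> Max C \<or> Max E + Max C = k \<and> 2 * Max C \<le> Max A"
    using Fam_memE[OF EB assms(1) \<open>0 \<in> A\<close> assms(4)] .
  obtain C' where D: "D = E - promoted_gaps k A (Max C')"
    and levelC': "Max E + Max C' = Max A \<and> Max E \<le> Max C' \<or> Max E + Max C' = k \<and> 2 * Max C' \<le> Max A"
    using Fam_memE[OF ED assms(1) \<open>0 \<in> A\<close> assms(4)] .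
  have "Max C = Max C'" using levelC levelC' assms(4) by linarith
  then show False using B D assms(7) by simp
qed

end
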